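(* Let $m\ge2$ be even, $\beta>1$, and let $E_{\mathrm{hsc},m}$ be the $m\times2$ matrix whose $j$-th row is $(\cos(j\pi/m),\sin(j\pi/m))$. Let $E_1,E_2$ be its first and last $m/2$ rows, $v_\beta:=(\beta^{-1},\dots,\beta^{-m/2})$, and let $W$ be the $2\times2$ matrix with rows $v_\beta E_1$ and $v_\beta E_2$. Then $$\sigma_{\min}(W)=\|v_\beta E_1\|_2=\frac{(1+\beta^{-m})^{1/2}}{|\beta-e^{\pi i/m}|}\ \ge\ \beta^{-1},$$ with equality in the last inequality if and only if $m=2$.
   Context: $\sigma_{\min}$ denotes the smallest singular value. *)

theory Defs
  imports "HOL-Analysis.Analysis"
begin

definition hsc_row :: "nat \<Rightarrow> nat \<Rightarrow> real^2" where
  "hsc_row m j = vector [cos (real j * pi / real m), sin (real j * pi / real m)]"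

definition vE1 :: "nat \<Rightarrow> real \<Rightarrow> real^2" where
  "vE1 m \<beta> = (\<Sum>j = 1..m div 2. (inverse \<beta>) ^ j *\<^sub>R hsc_row m j)"

definition vE2 :: "nat \<Rightarrow> real \<Rightarrow> real^2" where
  "vE2 m \<beta> = (\<Sum>j = 1..m div 2. (inverse \<beta>) ^ j *\<^sub>R hsc_row m (m div 2 + j))"

definition W_hsc :: "nat \<Rightarrow> real \<Rightarrow> real^2^2" where
  "W_hsc m \<beta> = vector [vE1 m \<beta>, vE2 m \<beta>]"

definition sigma_min :: "real^'n^'n \<Rightarrow> real" where
  "sigma_min A = sqrt (Min {\<mu>. \<exists>x. x \<noteq> 0 \<and> (transpose A ** A) *v x = \<mu> *\<^sub>R x})"

end

theory Submission
  imports Defs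
begin

(* Write n = m/2, theta = pi/m, r = 1/beta and z = e^(i theta).
   (1) Shifting a row index by n adds n*theta = pi/2 to the angle, so the second row
       v_beta E_2 of W is the first row v_beta E_1 rotated by a quarter turn.  Hence
       W^T W = |v_beta E_1|^2 I, whose only eigenvalue gives sigma_min W = |v_beta E_1|.
   (2) Identifying R^2 with C, v_beta E_1 is the geometric sum S = sum_{j=1..n} (r z)^j.
       The telescoping identity (beta - z) S = z (1 - (r z)^n) together with
       (r z)^n = i r^n yields |v_beta E_1| = sqrt(1 + r^m) / |beta - z|.
   (3) Since |beta - z|^2 = beta^2 - 2 beta cos theta + 1, the bound
       sqrt(1 + r^m) / |beta - z| >= r amounts to r^2 - 2 r cos theta <= r^m; for m = 2
       this is an equality (cos theta = 0), for m >= 3 the left side is negative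
       because cos theta >= 1/2 > r/2.
   The file proves these three steps as separate lemmas; the theorem combines them. *)

lemma sigma_min_of_scalar_gram:
  fixes A :: "real^'n^'n"
  assumes gram: "\<And>x. (transpose A ** A) *v x = c *\<^sub>R x"
  shows "sigma_min A = sqrt c"
proof -
  have "{\<mu>. \<exists>x. x \<noteq> 0 \<and> (transpose A ** A) *v x = \<mu> *\<^sub>R x} = {c}"
  proof (intro equalityI subsetI)
    fix \<mu> assume "\<mu> \<in> {\<mu>. \<exists>x. x \<noteq> 0 \<and> (transpose A ** A) *v x = \<mu> *\<^sub>R x}"
    then obtain x where x: "x \<noteq> 0" "(transpose A ** A) *v x = \<mu> *\<^sub>R x" by blast
    then have "c *\<^sub>R x = \<mu> *\<^sub>R x" using gram by simp
    then show "\<mu> \<in> {c}" using x(1) by (simp add: scaleR_cancel_right)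
  next
    fix \<mu> assume "\<mu> \<in> {c}"
    moreover have "(vec 1 :: real^'n) \<noteq> 0" by (simp add: vec_eq_iff)
    ultimately show "\<mu> \<in> {\<mu>. \<exists>x. x \<noteq> 0 \<and> (transpose A ** A) *v x = \<mu> *\<^sub>R x}"
      using gram by blast
  qed
  then show ?thesis by (simp add: sigma_min_def)
qed

lemma norm_vec2_squared: "(norm (u :: real^2))\<^sup>2 = (u $ 1)\<^sup>2 + (u $ 2)\<^sup>2"
  by (simp add: norm_vec_def L2_set_def sum_2)

text \<open>If the second row of a 2x2 matrix is its first row turned by a quarter turn,
  the matrix is a scaled rotation and its Gram matrix is the squared row norm times I.\<close>
lemma gram_of_quarter_turn_rows:
  fixes u v :: "real^2"
  assumes "v $ 1 = - u $ 2" and "v $ 2 = u $ 1"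
  shows "(transpose (vector [u, v] :: real^2^2) ** vector [u, v]) *v x = (norm u)\<^sup>2 *\<^sub>R x"
  unfolding vec_eq_iff forall_2 norm_vec2_squared
  by (simp add: matrix_vector_mult_def matrix_matrix_mult_def transpose_def sum_2 assms
      power2_eq_square algebra_simps)

text \<open>For even m, the rows m/2+1..m of E_hsc,m are the rows 1..m/2 turned by pi/2;
  consequently v_beta E_2 is v_beta E_1 turned by a quarter turn.\<close>
lemma vE2_quarter_turn_of_vE1:
  assumes "even m" and "m > 0"
  shows "vE2 m \<beta> $ 1 = - vE1 m \<beta> $ 2" and "vE2 m \<beta> $ 2 = vE1 m \<beta> $ 1"
proof -
  have shift: "(real (m div 2) + real j) * pi / real m = pi / 2 + real j * pi / real m" for j
    using assms by (auto simp: field_simps elim!: evenE)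
  show "vE2 m \<beta> $ 1 = - vE1 m \<beta> $ 2" "vE2 m \<beta> $ 2 = vE1 m \<beta> $ 1"
    unfolding vE2_def vE1_def
    by (simp_all add: sum_component hsc_row_def shift cos_add sin_add sum_negf)
qed

lemma norm_vE1_geometric_sum:
  "norm (vE1 m \<beta>) = cmod (\<Sum>j = 1..m div 2. (cis (pi / real m) / complex_of_real \<beta>) ^ j)"
  (is "_ = cmod ?S")
proof -
  have "cis (pi / real m) / complex_of_real \<beta> = complex_of_real (inverse \<beta>) * cis (pi / real m)"
    by (simp add: divide_inverse mult.commute)
  then have polar: "(cis (pi / real m) / complex_of_real \<beta>) ^ j
      = complex_of_real (inverse \<beta> ^ j) * cis (real j * pi / real m)" for j
    by (simp add: power_mult_distrib Complex.DeMoivre)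
  have cartesian: "complex_of_real a * cis t = Complex (a * cos t) (a * sin t)" for a t
    by (simp add: complex_eq_iff)
  have term_j: "(cis (pi / real m) / complex_of_real \<beta>) ^ j
      = Complex (inverse \<beta> ^ j * cos (real j * pi / real m))
                (inverse \<beta> ^ j * sin (real j * pi / real m))" for j
    by (simp only: polar cartesian)
  have "vE1 m \<beta> $ 1 = Re ?S" and "vE1 m \<beta> $ 2 = Im ?S"
    unfolding vE1_def term_j by (simp_all add: sum_component Re_sum Im_sum hsc_row_def)
  then show ?thesis
    using norm_vec2_squared[of "vE1 m \<beta>"]
    by (simp add: cmod_def real_sqrt_unique)
qed

text \<open>Telescoping the geometric sum of (z/b)^j: multiplying by b - z leaves only the
  first and the last term.\<close>
lemma geometric_sum_times_difference:
  fixes b z :: complex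
  assumes "b \<noteq> 0"
  shows "(b - z) * (\<Sum>j = 1..n. (z / b) ^ j) = z * (1 - (z / b) ^ n)"
proof (cases "n = 0")
  case False
  define w where "w = z / b"
  have "(b - z) * (\<Sum>j = 1..n. w ^ j) = b * ((1 - w) * (\<Sum>j = 1..n. w ^ j))"
    using assms by (simp add: w_def field_simps)
  also have "\<dots> = b * (w ^ 1 - w ^ Suc n)"
    using False by (simp add: sum_gp_multiplied)
  also have "\<dots> = z * (1 - w ^ n)"
    using assms by (simp add: w_def field_simps)
  finally show ?thesis by (simp add: w_def)
qed simp

text \<open>With theta = pi/(2n), the n-th power of e^(i theta) / b is i / b^n.\<close>
lemma norm_one_minus_power_quarter_turn:
  assumes "n > 0"
  shows "cmod (1 - (cis (pi / (2 * real n)) / complex_of_real b) ^ n) = sqrt (1 + (inverse b) ^ (2 * n))"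
proof -
  have "cis (pi / (2 * real n)) ^ n = \<i>"
    using assms by (simp add: Complex.DeMoivre)
  moreover have "b ^ n / (b ^ n)\<^sup>2 = inverse (b ^ n)"
    using assms by (cases "b = 0") (simp_all add: power2_eq_square divide_inverse)
  ultimately have "1 - (cis (pi / (2 * real n)) / complex_of_real b) ^ n = Complex 1 (- (inverse b ^ n))"
    by (simp add: power_divide complex_eq_iff Re_divide Im_divide power_inverse)
  then show ?thesis
    by (simp add: complex_norm power_mult power2_eq_square power_mult_distrib)
qed

lemma real_minus_cis_nonzero:
  assumes "b > 1"
  shows "complex_of_real b - cis t \<noteq> 0"
proof
  assume "complex_of_real b - cis t = 0"
  then have "Re (complex_of_real b - cis t) = 0" by simp
  then show False using assms cos_le_one[of t] by simp
qed

lemma norm_vE1_closed_form: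
  assumes "even m" and "m > 0" and "\<beta> > 1"
  shows "norm (vE1 m \<beta>) = sqrt (1 + (inverse \<beta>) ^ m) / cmod (complex_of_real \<beta> - cis (pi / real m))"
proof -
  define z where "z = cis (pi / real m)"
  define n where "n = m div 2"
  have m_n: "m = 2 * n" and n_pos: "n > 0" using assms by (auto simp: n_def)
  have "(complex_of_real \<beta> - z) * (\<Sum>j = 1..n. (z / complex_of_real \<beta>) ^ j)
      = z * (1 - (z / complex_of_real \<beta>) ^ n)"
    using assms(3) by (intro geometric_sum_times_difference) simp
  then have "cmod (complex_of_real \<beta> - z) * norm (vE1 m \<beta>)
      = cmod (z * (1 - (z / complex_of_real \<beta>) ^ n))"
    unfolding norm_vE1_geometric_sum norm_mult[symmetric] z_def n_def by simp
  also have "\<dots> = sqrt (1 + (inverse \<beta>) ^ m)"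
    using norm_one_minus_power_quarter_turn[OF n_pos, of \<beta>]
    by (simp add: norm_mult z_def m_n)
  finally have product: "cmod (complex_of_real \<beta> - z) * norm (vE1 m \<beta>) = sqrt (1 + (inverse \<beta>) ^ m)" .
  have "complex_of_real \<beta> - z \<noteq> 0"
    unfolding z_def using assms(3) by (rule real_minus_cis_nonzero)
  then show ?thesis using product by (simp add: z_def field_simps)
qed

lemma cmod_real_minus_cis_squared:
  "(cmod (complex_of_real b - cis t))\<^sup>2 = b\<^sup>2 - 2 * b * cos t + 1"
proof -
  have "(cmod (complex_of_real b - cis t))\<^sup>2 = (b - cos t)\<^sup>2 + (sin t)\<^sup>2"
    by (simp add: cmod_power2)
  then show ?thesis using sin_cos_squared_add[of t] by (simp add: power2_eq_square algebra_simps)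
qed

text \<open>The angle pi/m is at most pi/3 once m \<ge> 3.\<close>
lemma cos_pi_div_ge_half:
  fixes m :: nat assumes "m \<ge> 3"
  shows "cos (pi / real m) \<ge> 1/2"
proof -
  have "pi / real m \<le> pi / 3" using assms by (intro divide_left_mono) auto
  then have "cos (pi / 3) \<le> cos (pi / real m)" by (intro cos_monotone_0_pi_le) auto
  then show ?thesis by (simp add: cos_60)
qed

text \<open>The scalar inequality behind sigma_min W \<ge> 1/beta, after multiplying by r = 1/beta and
  squaring: 1 - 2 r cos(pi/m) + r^2 \<le> 1 + r^m, with equality exactly for m = 2.\<close>
lemma squared_bound:
  fixes r :: real
  assumes "m \<ge> 2" and "0 < r" and "r < 1"
  shows "1 - 2 * r * cos (pi / real m) + r\<^sup>2 \<le> 1 + r ^ m"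
    and "1 - 2 * r * cos (pi / real m) + r\<^sup>2 = 1 + r ^ m \<longleftrightarrow> m = 2"
proof -
  have "1 - 2 * r * cos (pi / real m) + r\<^sup>2 < 1 + r ^ m" if "m \<noteq> 2"
  proof -
    have "r * r < r * (2 * cos (pi / real m))"
      using assms that cos_pi_div_ge_half[of m] by (intro mult_strict_left_mono) auto
    moreover have "r ^ m > 0" using assms by simp
    ultimately show ?thesis by (simp add: power2_eq_square algebra_simps)
  qed
  moreover have "1 - 2 * r * cos (pi / real m) + r\<^sup>2 = 1 + r ^ m" if "m = 2"
    using that by (simp add: power2_eq_square)
  ultimately show "1 - 2 * r * cos (pi / real m) + r\<^sup>2 \<le> 1 + r ^ m"
    and "1 - 2 * r * cos (pi / real m) + r\<^sup>2 = 1 + r ^ m \<longleftrightarrow> m = 2"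
    by (cases "m = 2"; force)+
qed

lemma closed_form_lower_bound:
  assumes "m \<ge> 2" and "\<beta> > 1"
  defines "D \<equiv> cmod (complex_of_real \<beta> - cis (pi / real m))"
  shows "sqrt (1 + (inverse \<beta>) ^ m) / D \<ge> inverse \<beta>"
    and "sqrt (1 + (inverse \<beta>) ^ m) / D = inverse \<beta> \<longleftrightarrow> m = 2"
proof -
  define r where "r = inverse \<beta>"
  have r: "0 < r" "r < 1" using assms(2) by (auto simp: r_def inverse_less_1_iff)
  have D_pos: "D > 0"
    unfolding D_def using real_minus_cis_nonzero[OF assms(2)] by simp
  have r2D2: "(r * D)\<^sup>2 = 1 - 2 * r * cos (pi / real m) + r\<^sup>2"
    unfolding power_mult_distrib D_def cmod_real_minus_cis_squared
    using assms(2) by (simp add: r_def power2_eq_square field_simps)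
  have root: "(sqrt (1 + r ^ m))\<^sup>2 = 1 + r ^ m" using r by simp
  have nonneg: "0 \<le> r * D" "0 \<le> sqrt (1 + r ^ m)" using r D_pos by auto
  have "(r * D)\<^sup>2 \<le> (sqrt (1 + r ^ m))\<^sup>2"
    unfolding r2D2 root by (rule squared_bound(1)[OF assms(1) r])
  then have "r * D \<le> sqrt (1 + r ^ m)" using nonneg(2) by (rule power2_le_imp_le)
  then show "sqrt (1 + (inverse \<beta>) ^ m) / D \<ge> inverse \<beta>"
    using D_pos by (simp add: r_def field_simps)
  have "r * D = sqrt (1 + r ^ m) \<longleftrightarrow> m = 2"
    unfolding power2_eq_iff_nonneg[OF nonneg, symmetric] r2D2 root
    by (rule squared_bound(2)[OF assms(1) r])
  then show "sqrt (1 + (inverse \<beta>) ^ m) / D = inverse \<beta> \<longleftrightarrow> m = 2"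
    using D_pos by (auto simp: r_def field_simps)
qed

theorem mainTheorem4:
  fixes m :: nat and \<beta> :: real
  assumes "even m" and "m \<ge> 2" and "\<beta> > 1"
  shows "sigma_min (W_hsc m \<beta>) = norm (vE1 m \<beta>)
    \<and> norm (vE1 m \<beta>) = sqrt (1 + (inverse \<beta>) ^ m)
          / cmod (complex_of_real \<beta> - exp (\<i> * complex_of_real (pi / real m)))
    \<and> sqrt (1 + (inverse \<beta>) ^ m)
          / cmod (complex_of_real \<beta> - exp (\<i> * complex_of_real (pi / real m))) \<ge> inverse \<beta>
    \<and> (sqrt (1 + (inverse \<beta>) ^ m)
          / cmod (complex_of_real \<beta> - exp (\<i> * complex_of_real (pi / real m))) = inverse \<beta>
        \<longleftrightarrow> m = 2)"
proof -
  have m_pos: "m > 0" using assms(2) by simp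
  have gram: "\<And>x. (transpose (W_hsc m \<beta>) ** W_hsc m \<beta>) *v x = (norm (vE1 m \<beta>))\<^sup>2 *\<^sub>R x"
    unfolding W_hsc_def
    by (rule gram_of_quarter_turn_rows) (simp_all add: vE2_quarter_turn_of_vE1[OF assms(1) m_pos])
  have "sigma_min (W_hsc m \<beta>) = norm (vE1 m \<beta>)"
    using sigma_min_of_scalar_gram[OF gram] by simp
  moreover have "exp (\<i> * complex_of_real (pi / real m)) = cis (pi / real m)"
    by (simp add: cis_conv_exp)
  ultimately show ?thesis
    using norm_vE1_closed_form[OF assms(1) m_pos] closed_form_lower_bound[OF assms(2,3)]
      assms(3) by simp
qed

end
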